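(* Let $K$ be a field and $X=\{y_{ij}\mid i,j\in\mathbb N,\ i\ge j\}$. For all $b_0,b_1\in K[X]$ the set $(\mathrm{Inc}(\mathbb N)b_0)\times(\mathrm{Inc}(\mathbb N)b_1)$ is the union of finitely many $\mathrm{Inc}(\mathbb N)$-orbits under the diagonal action.
   Context: $\mathrm{Inc}(\mathbb N)$ is the monoid of strictly increasing maps $\pi:\mathbb N\to\mathbb N$, acting on $K[X]$ by ring homomorphisms with $\pi y_{ij}=y_{\pi(i)\pi(j)}$; the diagonal action on $K[X]\times K[X]$ is $\pi(f,h)=(\pi f,\pi h)$, and an orbit is a set $\{\pi(f,h)\mid \pi\in\mathrm{Inc}(\mathbb N)\}$. *)

theory Defs
  imports Main "HOL-Library.Poly_Mapping"
begin

text \<open>Polynomials over a coefficient type 'k in variables indexed by nat \<times> nat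
  (variable (i,j) stands for y_ij): a finitely supported map from monomials
  (finitely supported exponent vectors) to coefficients.\<close>

type_synonym 'k ypoly = "((nat \<times> nat) \<Rightarrow>\<^sub>0 nat) \<Rightarrow>\<^sub>0 'k"

definition Xvars :: "(nat \<times> nat) set" where
  "Xvars = {(i, j). j \<le> i}"

definition KX :: "'k::field ypoly set" where
  "KX = {f :: 'k ypoly. \<forall>m \<in> Poly_Mapping.keys f. Poly_Mapping.keys m \<subseteq> Xvars}"

definition yvar :: "nat \<times> nat \<Rightarrow> 'k::field ypoly" where
  "yvar v = Poly_Mapping.single (Poly_Mapping.single v 1) 1"

definition const :: "'k::field \<Rightarrow> 'k ypoly" where
  "const c = Poly_Mapping.single 0 c"

definition IncN :: "(nat \<Rightarrow> nat) set" where
  "IncN = {\<pi>. strict_mono \<pi>}"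

definition inc_act :: "(nat \<Rightarrow> nat) \<Rightarrow> 'k::field ypoly \<Rightarrow> 'k ypoly" where
  "inc_act \<pi> f = (\<Sum>m\<in>Poly_Mapping.keys f. const (Poly_Mapping.lookup f m) *
      (\<Prod>v\<in>Poly_Mapping.keys m. yvar (\<pi> (fst v), \<pi> (snd v)) ^ Poly_Mapping.lookup m v))"

definition orbit :: "'k::field ypoly \<Rightarrow> 'k ypoly set" where
  "orbit f = {inc_act \<pi> f | \<pi>. \<pi> \<in> IncN}"

definition diag_orbit :: "'k::field ypoly \<times> 'k ypoly \<Rightarrow> ('k ypoly \<times> 'k ypoly) set" where
  "diag_orbit p = {(inc_act \<pi> (fst p), inc_act \<pi> (snd p)) | \<pi>. \<pi> \<in> IncN}"

end

theory Submission
  imports Defs "HOL-Library.Infinite_Set" "HOL-Library.FuncSet"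
begin

text \<open>A polynomial only involves the variables y_ij with i, j below some n, so its image under
  \<pi> \<in> Inc(N) depends only on \<pi> restricted to [0, n). Any two restrictions \<pi>|[0,n), \<sigma>|[0,n)
  have together at most 2n values, and a strictly increasing e enumerating these values first
  factors \<pi> = e \<circ> g and \<sigma> = e \<circ> h on [0, n) with g, h mapping [0, n) into [0, 2n). Hence every
  pair (\<pi> b0, \<sigma> b1) lies in the orbit of one of the finitely many pairs (g b0, h b1).\<close>

definition push_keys :: "('a \<Rightarrow> 'c) \<Rightarrow> ('a \<Rightarrow>\<^sub>0 'b::comm_monoid_add) \<Rightarrow> 'c \<Rightarrow>\<^sub>0 'b" where
  "push_keys \<phi> f =
     (\<Sum>a\<in>Poly_Mapping.keys f. Poly_Mapping.single (\<phi> a) (Poly_Mapping.lookup f a))"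

lemma push_keys_add: "push_keys \<phi> (f + g) = push_keys \<phi> f + push_keys \<phi> g"
  unfolding push_keys_def by (rule setsum_keys_plus_distrib) (simp_all add: single_add)

lemma push_keys_zero [simp]: "push_keys \<phi> 0 = 0"
  by (simp add: push_keys_def)

lemma push_keys_single [simp]:
  "push_keys \<phi> (Poly_Mapping.single a c) = Poly_Mapping.single (\<phi> a) c"
  by (simp add: push_keys_def)

lemma push_keys_sum: "push_keys \<phi> (\<Sum>i\<in>I. g i) = (\<Sum>i\<in>I. push_keys \<phi> (g i))"
  by (induction I rule: infinite_finite_induct) (simp_all add: push_keys_add)

lemma push_keys_push_keys: "push_keys \<psi> (push_keys \<phi> f) = push_keys (\<psi> \<circ> \<phi>) f"
  by (simp only: push_keys_def[of \<phi> f] push_keys_sum push_keys_single)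
     (simp add: push_keys_def)

lemma push_keys_comp_push_keys: "push_keys \<psi> \<circ> push_keys \<phi> = push_keys (\<psi> \<circ> \<phi>)"
  by (simp add: fun_eq_iff push_keys_push_keys)

lemma push_keys_cong:
  "(\<And>a. a \<in> Poly_Mapping.keys f \<Longrightarrow> \<phi> a = \<psi> a) \<Longrightarrow> push_keys \<phi> f = push_keys \<psi> f"
  by (simp add: push_keys_def)

lemma keys_push_keys: "Poly_Mapping.keys (push_keys \<phi> f) \<subseteq> \<phi> ` Poly_Mapping.keys f"
  using keys_sum[of "\<lambda>a. Poly_Mapping.single (\<phi> a) (Poly_Mapping.lookup f a)"]
  by (force simp: push_keys_def split: if_splits)

definition pair_map :: "(nat \<Rightarrow> nat) \<Rightarrow> nat \<times> nat \<Rightarrow> nat \<times> nat" where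
  "pair_map \<pi> v = (\<pi> (fst v), \<pi> (snd v))"

lemma yvar_power: "(yvar v :: 'k::field ypoly) ^ e = Poly_Mapping.single (Poly_Mapping.single v e) 1"
  unfolding yvar_def
  by (induction e) (simp_all add: mult_single single_add[symmetric] add.commute)

lemma prod_single_one:
  "finite A \<Longrightarrow> (\<Prod>a\<in>A. Poly_Mapping.single (g a) 1 :: 'k::field ypoly) =
     Poly_Mapping.single (\<Sum>a\<in>A. g a) 1"
  by (induction A rule: finite_induct) (simp_all add: mult_single)

lemma inc_act_eq_push_keys:
  "inc_act \<pi> (f :: 'k::field ypoly) = push_keys (push_keys (pair_map \<pi>)) f"
  unfolding inc_act_def push_keys_def
  by (rule sum.cong[OF refl])
     (simp add: yvar_power prod_single_one const_def mult_single pair_map_def)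

lemma inc_act_inc_act: "inc_act \<tau> (inc_act \<pi> (f :: 'k::field ypoly)) = inc_act (\<tau> \<circ> \<pi>) f"
proof -
  have "pair_map \<tau> \<circ> pair_map \<pi> = pair_map (\<tau> \<circ> \<pi>)"
    by (simp add: fun_eq_iff pair_map_def)
  then show ?thesis
    by (simp add: inc_act_eq_push_keys push_keys_push_keys push_keys_comp_push_keys)
qed

lemma inc_act_in_KX:
  assumes "strict_mono \<pi>" and "f \<in> KX"
  shows "inc_act \<pi> (f :: 'k::field ypoly) \<in> KX"
  unfolding KX_def
proof (intro CollectI ballI)
  fix m assume "m \<in> Poly_Mapping.keys (inc_act \<pi> f)"
  then have "m \<in> push_keys (pair_map \<pi>) ` Poly_Mapping.keys f"
    using keys_push_keys[of "push_keys (pair_map \<pi>)" f] by (auto simp: inc_act_eq_push_keys)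
  then obtain m0 where m0: "m0 \<in> Poly_Mapping.keys f" "m = push_keys (pair_map \<pi>) m0"
    by blast
  have "pair_map \<pi> v \<in> Xvars" if "v \<in> Poly_Mapping.keys m0" for v
  proof -
    have "v \<in> Xvars"
      using assms(2) m0(1) that by (auto simp: KX_def)
    then have "\<pi> (snd v) \<le> \<pi> (fst v)"
      using assms(1) by (auto simp: Xvars_def strict_mono_less_eq)
    then show ?thesis
      by (simp add: Xvars_def pair_map_def)
  qed
  then show "Poly_Mapping.keys m \<subseteq> Xvars"
    using keys_push_keys[of "pair_map \<pi>" m0] m0(2) by auto
qed

definition vars_below :: "nat \<Rightarrow> 'k::field ypoly \<Rightarrow> bool" where
  "vars_below n f \<longleftrightarrow>
     (\<forall>m\<in>Poly_Mapping.keys f. \<forall>v\<in>Poly_Mapping.keys m. fst v < n \<and> snd v < n)"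

lemma vars_below_mono: "vars_below n f \<Longrightarrow> n \<le> n' \<Longrightarrow> vars_below n' f"
  by (fastforce simp: vars_below_def)

lemma KX_vars_below:
  assumes "f \<in> KX"
  obtains n where "vars_below n f"
proof -
  have "finite (fst ` (\<Union>m\<in>Poly_Mapping.keys f. Poly_Mapping.keys m))"
    by simp
  then obtain n where "fst ` (\<Union>m\<in>Poly_Mapping.keys f. Poly_Mapping.keys m) \<subseteq> {..<n}"
    by (auto simp: finite_nat_set_iff_bounded)
  with assms have "vars_below n f"
    by (fastforce simp: vars_below_def KX_def Xvars_def)
  then show ?thesis ..
qed

lemma inc_act_cong_vars_below:
  assumes "vars_below n f" and "\<And>i. i < n \<Longrightarrow> \<pi> i = \<rho> i"
  shows "inc_act \<pi> f = inc_act \<rho> f"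
  unfolding inc_act_eq_push_keys
  by (intro push_keys_cong) (use assms in \<open>auto simp: vars_below_def pair_map_def\<close>)

definition inc_bounded :: "nat \<Rightarrow> nat \<Rightarrow> (nat \<Rightarrow> nat) set" where
  "inc_bounded N n = {g. strict_mono g \<and> (\<forall>i<n. g i < N) \<and> (\<forall>i\<ge>n. g i = N + i)}"

lemma finite_inc_bounded: "finite (inc_bounded N n)"
proof -
  have "inc_bounded N n \<subseteq> (\<lambda>h i. if i < n then h i else N + i) ` ({..<n} \<rightarrow>\<^sub>E {..<N})"
  proof
    fix g assume g: "g \<in> inc_bounded N n"
    then have "g = (\<lambda>i. if i < n then restrict g {..<n} i else N + i)"
      by (auto simp: inc_bounded_def fun_eq_iff)
    moreover have "restrict g {..<n} \<in> {..<n} \<rightarrow>\<^sub>E {..<N}"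
      using g by (auto simp: inc_bounded_def)
    ultimately show "g \<in> (\<lambda>h i. if i < n then h i else N + i) ` ({..<n} \<rightarrow>\<^sub>E {..<N})"
      by blast
  qed
  then show ?thesis
    by (rule finite_subset) (simp add: finite_PiE)
qed

text \<open>Enumerate T followed by all numbers above T: the elements of T come first.\<close>

lemma finite_subset_strict_mono_image:
  fixes T :: "nat set"
  assumes "finite T"
  obtains e where "strict_mono e" and "T \<subseteq> e ` {..<card T}"
proof
  define M where "M = Suc (Max (insert 0 T))"
  have below_M: "y < M" if "y \<in> T" for y
    using assms that by (simp add: M_def le_imp_less_Suc)
  define A where "A = T \<union> {M..}"
  have inf: "infinite A"
    by (simp add: A_def infinite_Ici)
  define e where "e = enumerate A"
  show mono: "strict_mono e"
    using inf by (simp add: e_def strict_mono_def)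
  show "T \<subseteq> e ` {..<card T}"
  proof
    fix y assume "y \<in> T"
    then obtain k where k: "e k = y"
      using enumerate_Ex[OF inf] by (auto simp: e_def A_def)
    have "e ` {..k} \<subseteq> T"
    proof
      fix x assume "x \<in> e ` {..k}"
      then obtain j where "j \<le> k" "x = e j" by auto
      moreover have "e j \<in> A"
        using enumerate_in_set[OF inf] by (simp add: e_def)
      moreover have "e j \<le> e k"
        using \<open>j \<le> k\<close> mono by (simp add: strict_mono_less_eq)
      ultimately show "x \<in> T"
        using below_M[OF \<open>y \<in> T\<close>] k by (auto simp: A_def)
    qed
    moreover have "inj_on e {..k}"
      using mono by (rule strict_mono_imp_inj_on)
    ultimately have "card {..k} \<le> card T"
      using card_inj_on_le assms by blast
    then show "y \<in> e ` {..<card T}"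
      using k by auto
  qed
qed

lemma strict_mono_factor_inc_bounded:
  assumes \<pi>: "strict_mono \<pi>" and e: "strict_mono e" and range: "\<pi> ` {..<n} \<subseteq> e ` {..<N}"
  obtains g where "g \<in> inc_bounded N n" and "\<And>i. i < n \<Longrightarrow> e (g i) = \<pi> i"
proof
  define g where "g i = (if i < n then inv_into {..<N} e (\<pi> i) else N + i)" for i
  have g_below: "g i < N" and e_g: "e (g i) = \<pi> i" if "i < n" for i
    using range that inv_into_into[of "\<pi> i" e "{..<N}"] f_inv_into_f[of "\<pi> i" e "{..<N}"]
    by (auto simp: g_def)
  show "e (g i) = \<pi> i" if "i < n" for i
    using that by (rule e_g)
  have "strict_mono g"
  proof (rule strict_monoI)
    fix i j :: nat assume "i < j"
    show "g i < g j"
    proof (cases "j < n")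
      case True
      then have "e (g i) < e (g j)"
        using \<open>i < j\<close> e_g \<pi> by (simp add: strict_mono_less)
      then show ?thesis
        using e by (simp add: strict_mono_less)
    next
      case False
      then show ?thesis
        using \<open>i < j\<close> g_below[of i] by (auto simp: g_def)
    qed
  qed
  then show "g \<in> inc_bounded N n"
    using g_below by (auto simp: inc_bounded_def g_def)
qed

lemma strict_mono_common_factor:
  fixes \<pi> \<sigma> :: "nat \<Rightarrow> nat"
  assumes "strict_mono \<pi>" and "strict_mono \<sigma>"
  obtains e g h where "strict_mono e" and "g \<in> inc_bounded (2 * n) n" and "h \<in> inc_bounded (2 * n) n"
    and "\<And>i. i < n \<Longrightarrow> e (g i) = \<pi> i" and "\<And>i. i < n \<Longrightarrow> e (h i) = \<sigma> i"
proof -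
  define T where "T = \<pi> ` {..<n} \<union> \<sigma> ` {..<n}"
  have "card T \<le> 2 * n"
    using card_Un_le[of "\<pi> ` {..<n}" "\<sigma> ` {..<n}"]
      card_image_le[of "{..<n}" \<pi>] card_image_le[of "{..<n}" \<sigma>]
    by (simp add: T_def)
  moreover obtain e where e: "strict_mono e" "T \<subseteq> e ` {..<card T}"
    using finite_subset_strict_mono_image[of T] by (auto simp: T_def)
  ultimately have "T \<subseteq> e ` {..<2 * n}"
    by auto
  then have "\<pi> ` {..<n} \<subseteq> e ` {..<2 * n}" and "\<sigma> ` {..<n} \<subseteq> e ` {..<2 * n}"
    by (auto simp: T_def)
  then show ?thesis
    using strict_mono_factor_inc_bounded[OF assms(1) e(1)]
      strict_mono_factor_inc_bounded[OF assms(2) e(1)] that e(1)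
    by metis
qed

lemma diag_orbits_subset_orbit_times_orbit:
  assumes "G \<subseteq> IncN" and "H \<subseteq> IncN"
  shows "(\<Union>p\<in>(\<lambda>(g, h). (inc_act g b0, inc_act h b1)) ` (G \<times> H). diag_orbit p) \<subseteq> orbit b0 \<times> orbit b1"
proof clarsimp
  fix g h \<pi> \<sigma> assume gh: "g \<in> G" "h \<in> H" and "(\<pi>, \<sigma>) \<in> diag_orbit (inc_act g b0, inc_act h b1)"
  then obtain \<tau> where \<tau>: "strict_mono \<tau>" and "\<pi> = inc_act (\<tau> \<circ> g) b0" "\<sigma> = inc_act (\<tau> \<circ> h) b1"
    by (auto simp: diag_orbit_def IncN_def inc_act_inc_act)
  moreover have "strict_mono (\<tau> \<circ> g)" and "strict_mono (\<tau> \<circ> h)"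
    using assms gh \<tau> by (auto simp: IncN_def strict_mono_def)
  ultimately show "\<pi> \<in> orbit b0 \<and> \<sigma> \<in> orbit b1"
    by (auto simp: orbit_def IncN_def)
qed

lemma orbit_times_orbit_subset_diag_orbits:
  assumes "vars_below n b0" and "vars_below n b1"
  defines "S \<equiv> inc_bounded (2 * n) n"
  shows "orbit b0 \<times> orbit b1 \<subseteq>
    (\<Union>p\<in>(\<lambda>(g, h). (inc_act g b0, inc_act h b1)) ` (S \<times> S). diag_orbit p)"
proof
  fix x assume "x \<in> orbit b0 \<times> orbit b1"
  then obtain \<pi> \<sigma> where mono: "strict_mono \<pi>" "strict_mono \<sigma>"
    and x: "x = (inc_act \<pi> b0, inc_act \<sigma> b1)"
    by (auto simp: orbit_def IncN_def)
  obtain e g h where e: "strict_mono e" and gh: "g \<in> S" "h \<in> S"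
    and "\<And>i. i < n \<Longrightarrow> e (g i) = \<pi> i" "\<And>i. i < n \<Longrightarrow> e (h i) = \<sigma> i"
    using strict_mono_common_factor[OF mono, of n] unfolding S_def by blast
  with assms(1,2) have "inc_act \<pi> b0 = inc_act e (inc_act g b0)" "inc_act \<sigma> b1 = inc_act e (inc_act h b1)"
    by (simp_all add: inc_act_inc_act inc_act_cong_vars_below[where \<rho> = "e \<circ> _"])
  with e x have "x \<in> diag_orbit (inc_act g b0, inc_act h b1)"
    by (auto simp: diag_orbit_def IncN_def)
  with gh show "x \<in> (\<Union>p\<in>(\<lambda>(g, h). (inc_act g b0, inc_act h b1)) ` (S \<times> S). diag_orbit p)"
    by blast
qed

theorem lemma3p4:
  fixes b0 b1 :: "'k::field ypoly"
  assumes "b0 \<in> KX" and "b1 \<in> KX"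
  shows "\<exists>F. finite F \<and> F \<subseteq> KX \<times> KX \<and>
           orbit b0 \<times> orbit b1 = (\<Union>p\<in>F. diag_orbit p)"
proof -
  obtain n0 n1 where "vars_below n0 b0" "vars_below n1 b1"
    using assms KX_vars_below by metis
  then have vars: "vars_below (max n0 n1) b0" "vars_below (max n0 n1) b1"
    by (auto intro: vars_below_mono)
  define S where "S = inc_bounded (2 * max n0 n1) (max n0 n1)"
  have S_IncN: "S \<subseteq> IncN"
    by (auto simp: S_def inc_bounded_def IncN_def)
  define F where "F = (\<lambda>(g, h). (inc_act g b0, inc_act h b1)) ` (S \<times> S)"
  have "finite F"
    by (simp add: F_def S_def finite_inc_bounded)
  moreover have "F \<subseteq> KX \<times> KX"
    using assms by (auto simp: F_def S_def inc_bounded_def inc_act_in_KX)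
  moreover have "orbit b0 \<times> orbit b1 = (\<Union>p\<in>F. diag_orbit p)"
  proof
    show "orbit b0 \<times> orbit b1 \<subseteq> (\<Union>p\<in>F. diag_orbit p)"
      using orbit_times_orbit_subset_diag_orbits[OF vars] by (simp add: F_def S_def)
    show "(\<Union>p\<in>F. diag_orbit p) \<subseteq> orbit b0 \<times> orbit b1"
      unfolding F_def by (rule diag_orbits_subset_orbit_times_orbit[OF S_IncN S_IncN])
  qed
  ultimately show ?thesis
    by blast
qed

end
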